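(* Let $V\in\mathbb{R}^{d\times d}$ be symmetric positive definite, let $\hat\theta\in\mathbb{R}^d$ and $\beta\ge 0$, and let $\mathcal{E}=\{\theta\in\mathbb{R}^d:\|\theta-\hat\theta\|_V\le\beta\}$. Assume $\|\hat\theta\|_V>\beta$ and put $\phi=\sqrt{\|\hat\theta\|_V^2-\beta^2}>0$. Then $0\notin\mathcal{E}$, and for every $\theta\in\mathcal{E}$, $$\Big\|\tfrac{\theta}{\|\theta\|}\Big\|_V\le\frac{\|\hat\theta\|_{V^2}}{\phi}.$$
   Context: $\|\cdot\|$ is the Euclidean norm. For a symmetric positive definite matrix $A$, $\|x\|_A=\sqrt{x^\top Ax}$; in particular $\|\hat\theta\|_{V^2}=\sqrt{\hat\theta^\top V^2\hat\theta}=\|V\hat\theta\|$. The vector $\theta/\|\theta\|$ is the maximizer of $x\mapsto\langle x,\theta\rangle$ over the unit sphere $\{x:\|x\|=1\}$. *)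

theory Defs
  imports "HOL-Analysis.Analysis"
begin

definition wnorm :: "real^'n^'n \<Rightarrow> real^'n \<Rightarrow> real" where
  "wnorm A x = sqrt (x \<bullet> (A *v x))"

definition sym_pos_def_mat :: "real^'n^'n \<Rightarrow> bool" where
  "sym_pos_def_mat V \<longleftrightarrow> transpose V = V \<and> (\<forall>x. x \<noteq> 0 \<longrightarrow> x \<bullet> (V *v x) > 0)"

end

theory Submission
  imports Defs
begin

text \<open>If \<open>\<theta>\<close> lies in the ellipsoid of radius \<open>\<beta>\<close> around \<open>\<theta>\<^sub>0\<close>, expanding
  \<open>\<parallel>\<theta> - \<theta>\<^sub>0\<parallel>\<^sub>V\<^sup>2 \<le> \<beta>\<^sup>2\<close> gives \<open>\<parallel>\<theta>\<parallel>\<^sub>V\<^sup>2 + \<phi>\<^sup>2 \<le> 2 \<langle>\<theta>, V\<theta>\<^sub>0\<rangle>\<close>. By AM-GM the left side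
  is at least \<open>2 \<parallel>\<theta>\<parallel>\<^sub>V \<phi>\<close>, and by Cauchy-Schwarz the right side is at most
  \<open>2 \<parallel>\<theta>\<parallel> \<parallel>V\<theta>\<^sub>0\<parallel>\<close>, and \<open>\<parallel>V\<theta>\<^sub>0\<parallel>\<close> is the \<open>V\<^sup>2\<close>-norm of \<open>\<theta>\<^sub>0\<close>. Dividing by \<open>\<parallel>\<theta>\<parallel> \<phi>\<close> and using
  homogeneity of \<open>\<parallel>\<cdot>\<parallel>\<^sub>V\<close> gives the bound. The origin is outside the ellipsoid because
  \<open>\<parallel>-\<theta>\<^sub>0\<parallel>\<^sub>V = \<parallel>\<theta>\<^sub>0\<parallel>\<^sub>V > \<beta>\<close>.\<close>

lemma inner_matrix_vector_commute:
  fixes V :: "real^'n^'n"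
  assumes "transpose V = V"
  shows "x \<bullet> (V *v y) = y \<bullet> (V *v x)"
proof -
  have "x \<bullet> (V *v y) = (x v* V) \<bullet> y" by (simp add: dot_lmul_matrix)
  also have "x v* V = V *v x" using assms by (metis transpose_matrix_vector)
  finally show ?thesis by (simp add: inner_commute)
qed

lemma sym_pos_def_mat_nonneg:
  assumes "sym_pos_def_mat V"
  shows "0 \<le> x \<bullet> (V *v x)"
  using assms by (cases "x = 0") (auto simp: sym_pos_def_mat_def less_imp_le)

text \<open>No definiteness is needed: the real \<^const>\<open>sqrt\<close> is odd, so \<open>sqrt (c\<^sup>2 q) = \<bar>c\<bar> sqrt q\<close>
  for every \<open>q\<close>.\<close>
lemma wnorm_scaleR: "wnorm V (c *\<^sub>R x) = \<bar>c\<bar> * wnorm V x"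
proof -
  have "c *\<^sub>R x \<bullet> (V *v (c *\<^sub>R x)) = c\<^sup>2 * (x \<bullet> (V *v x))"
    by (simp add: matrix_vector_mult_scaleR power2_eq_square)
  then show ?thesis by (simp add: wnorm_def real_sqrt_mult)
qed

lemma wnorm_minus: "wnorm V (- x) = wnorm V x"
  using wnorm_scaleR[of V "-1" x] by simp

lemma wnorm_power2:
  assumes "\<And>x. 0 \<le> x \<bullet> (V *v x)"
  shows "(wnorm V x)\<^sup>2 = x \<bullet> (V *v x)"
  using assms by (simp add: wnorm_def)

lemma wnorm_mult_self:
  assumes "transpose V = V"
  shows "wnorm (V ** V) x = norm (V *v x)"
proof -
  have "x \<bullet> ((V ** V) *v x) = (V *v x) \<bullet> (V *v x)"
    using inner_matrix_vector_commute[OF assms, of x "V *v x"]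
    by (simp flip: matrix_vector_mul_assoc)
  then show ?thesis by (simp add: wnorm_def norm_eq_sqrt_inner)
qed

lemma wnorm_diff_power2:
  assumes "transpose V = V" "\<And>x. 0 \<le> x \<bullet> (V *v x)"
  shows "(wnorm V (x - y))\<^sup>2 = (wnorm V x)\<^sup>2 - 2 * (x \<bullet> (V *v y)) + (wnorm V y)\<^sup>2"
  using inner_matrix_vector_commute[OF assms(1), of y x]
  by (simp add: wnorm_power2[OF assms(2)] matrix_vector_mult_diff_distrib
      inner_diff_left inner_diff_right)

lemma wnorm_mult_sqrt_le_of_wnorm_diff_le:
  fixes V :: "real^'n^'n"
  assumes "transpose V = V" "\<And>x. 0 \<le> x \<bullet> (V *v x)"
    and "wnorm V (x - y) \<le> beta"
  shows "wnorm V x * sqrt ((wnorm V y)\<^sup>2 - beta\<^sup>2) \<le> norm x * norm (V *v y)"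
proof (cases "beta\<^sup>2 \<le> (wnorm V y)\<^sup>2")
  case True
  define s phi where "s = wnorm V x" and "phi = sqrt ((wnorm V y)\<^sup>2 - beta\<^sup>2)"
  have "0 \<le> wnorm V (x - y)" using assms(2) by (simp add: wnorm_def)
  then have "(wnorm V (x - y))\<^sup>2 \<le> beta\<^sup>2" using assms(3) by (simp add: power_mono)
  then have "s\<^sup>2 + phi\<^sup>2 \<le> 2 * (x \<bullet> (V *v y))"
    using True wnorm_diff_power2[OF assms(1,2), of x y] by (simp add: s_def phi_def)
  moreover have "2 * s * phi \<le> s\<^sup>2 + phi\<^sup>2" by (rule sum_squares_bound)
  moreover have "x \<bullet> (V *v y) \<le> norm x * norm (V *v y)" by (rule norm_cauchy_schwarz)
  ultimately show ?thesis by (simp add: s_def phi_def)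
next
  case False
  txt \<open>The radicand is negative, and so is its real square root: the bound is trivial.\<close>
  have "0 \<le> wnorm V x" using assms(2) by (simp add: wnorm_def)
  moreover have "sqrt ((wnorm V y)\<^sup>2 - beta\<^sup>2) \<le> 0" using False by simp
  ultimately have "wnorm V x * sqrt ((wnorm V y)\<^sup>2 - beta\<^sup>2) \<le> 0"
    by (rule mult_nonneg_nonpos)
  also have "0 \<le> norm x * norm (V *v y)" by simp
  finally show ?thesis .
qed

theorem lemma1:
  fixes V :: "real^'n^'n" and theta_hat :: "real^'n" and beta :: real
  assumes "sym_pos_def_mat V"
    and "beta \<ge> 0"
    and "wnorm V theta_hat > beta"
  defines "E \<equiv> {theta. wnorm V (theta - theta_hat) \<le> beta}"
    and "phi \<equiv> sqrt ((wnorm V theta_hat)\<^sup>2 - beta\<^sup>2)"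
  shows "phi > 0 \<and> 0 \<notin> E \<and>
         (\<forall>theta\<in>E. wnorm V (theta /\<^sub>R norm theta) \<le> wnorm (V ** V) theta_hat / phi)"
proof -
  have sym: "transpose V = V" using assms(1) by (simp add: sym_pos_def_mat_def)
  note nonneg = sym_pos_def_mat_nonneg[OF assms(1)]
  have phi_pos: "phi > 0"
    using assms(2,3) by (simp add: phi_def power_strict_mono)
  have zero_notin: "0 \<notin> E"
    using assms(3) by (simp add: E_def wnorm_minus)
  have "wnorm V (theta /\<^sub>R norm theta) \<le> wnorm (V ** V) theta_hat / phi"
    if "theta \<in> E" for theta
  proof -
    have "norm theta > 0" using that zero_notin by auto
    moreover have "wnorm V theta * phi \<le> norm theta * norm (V *v theta_hat)"
      using wnorm_mult_sqrt_le_of_wnorm_diff_le[OF sym nonneg] that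
      by (simp add: E_def phi_def)
    ultimately show ?thesis
      using phi_pos by (simp add: wnorm_scaleR wnorm_mult_self[OF sym] divide_simps mult.commute)
  qed
  with phi_pos zero_notin show ?thesis by blast
qed

end
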